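(* In the joint design model with fully flexible users described in the context, let $\mathcal{M}^*=\{m:S(m)=S_{\min}\}$ and pick any $m^*\in\mathcal{M}^*$. Define profiles $\mathbf P^*$ by $$P^*_{n,t}(m)=\begin{cases}1-\tilde q_{n,t},&m=m^*,\\0,&m\ne m^*,\end{cases}$$ and let $$\mathbf x^*=\arg\min_{\mathbf x}\frac1T\sum_{t=0}^{T-1}\mathbb{E}\Bigl[C\Bigl(L^*_t+\sum_{m,n}(x_{n,t+1}(m)-x_{n,t}(m)I^*_{n,t}(m))\Bigr)\Bigr]$$ subject to $0\le x_{n,t}(m)\le S(m)$ for all $m,n,t$. Here $I^*_{n,t}(m)$ are the demand indicators under $\mathbf P^*$ and $L^*_t=\sum_{m,n}S(m)I^*_{n,t}(m)$. Then $(\mathbf P^*,\mathbf x^* )$ is a globally optimal solution of the joint problem. Moreover, if $|\mathcal{M}^*|=1$, then $(\mathbf P^*,\mathbf x^* )$ is the unique optimal solution.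
   Context: There are $N$ users, $M$ data items of sizes $S(m)>0$ with $S_{\min}=\min_mS(m)$, and a period of $T$ slots; slot indices are modulo $T$ and $x_{n,T}=x_{n,0}$. Each user $n$ has an initial demand profile $\tilde{\mathbf P}_{n,t}$ for each slot $t$, with inactivity probability $\tilde q_{n,t}=1-\sum_m\tilde P_{n,t}(m)$. For any choice of profiles $\mathbf P=(\mathbf P_{n,t})$, the demand indicators $I_{n,t}(m)\in\{0,1\}$ satisfy $\Pr(I_{n,t}(m)=1)=P_{n,t}(m)$ and $\sum_mI_{n,t}(m)\le1$, with independence across distinct users in the same slot. The load is $L_t=\sum_{m,n}S(m)I_{n,t}(m)$. The cost function $C:\mathbb{R}_+\to\mathbb{R}_+$ is smooth, strictly convex and increasing. Joint problem: minimize $$\frac1T\sum_{t=0}^{T-1}\mathbb{E}\Bigl[C\Bigl(L_t+\sum_{m=1}^M\sum_{n=1}^N(x_{n,t+1}(m)-x_{n,t}(m)I_{n,t}(m))\Bigr)\Bigr]$$ over $(\mathbf P,\mathbf x)$, where the expectation is under the profiles $\mathbf P$. The constraints are $0\le x_{n,t}(m)\le S(m)$ and $\mathbf P_{n,t}\in\mathcal F_{n,t}$ for all $n,t$. Under full flexibility, $\mathcal F_{n,t}=\{\mathbf P_{n,t}:P_{n,t}(m)\ge0\ \forall m,\ \sum_mP_{n,t}(m)=1-\tilde q_{n,t}\}$. *)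

theory Defs
  imports "HOL-Analysis.Analysis"
begin

text \<open>Users: finite type 'n. Items: finite type 'm. Slots: 0..T-1 (nat), slot T identified with 0.\<close>

definition strictly_convex_on :: "real set \<Rightarrow> (real \<Rightarrow> real) \<Rightarrow> bool" where
  "strictly_convex_on A f \<longleftrightarrow>
     (\<forall>x\<in>A. \<forall>y\<in>A. \<forall>u::real. x \<noteq> y \<and> 0 < u \<and> u < 1 \<longrightarrow>
        f (u * x + (1 - u) * y) < u * f x + (1 - u) * f y)"

definition inact :: "('m::finite \<Rightarrow> real) \<Rightarrow> real" where
  "inact p = 1 - (\<Sum>m\<in>UNIV. p m)"

text \<open>Probability that one user's demand outcome in a slot is o (None = inactive,
  Some m = requests item m), under profile p.\<close>
definition outcome_prob :: "('m::finite \<Rightarrow> real) \<Rightarrow> 'm option \<Rightarrow> real" where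
  "outcome_prob p oc = (case oc of None \<Rightarrow> inact p | Some m \<Rightarrow> p m)"

definition ind :: "'m option \<Rightarrow> 'm \<Rightarrow> real" where
  "ind oc m = (if oc = Some m then 1 else 0)"

text \<open>Expected cost in slot t: expectation over the joint outcome c of all users,
  users independent in the same slot. x n t m is the amount of item m prefetched
  for user n before slot t; slot indices modulo T.\<close>
definition slot_cost ::
  "(real \<Rightarrow> real) \<Rightarrow> ('m::finite \<Rightarrow> real) \<Rightarrow> nat \<Rightarrow>
   ('n::finite \<Rightarrow> nat \<Rightarrow> 'm \<Rightarrow> real) \<Rightarrow> ('n \<Rightarrow> nat \<Rightarrow> 'm \<Rightarrow> real) \<Rightarrow> nat \<Rightarrow> real" where
  "slot_cost C S T P x t =
     (\<Sum>c\<in>(UNIV :: ('n \<Rightarrow> 'm option) set).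
        (\<Prod>n\<in>UNIV. outcome_prob (P n t) (c n)) *
        C ((\<Sum>m\<in>UNIV. \<Sum>n\<in>UNIV. S m * ind (c n) m)
           + (\<Sum>m\<in>UNIV. \<Sum>n\<in>UNIV. x n (Suc t mod T) m - x n t m * ind (c n) m)))"

definition joint_cost ::
  "(real \<Rightarrow> real) \<Rightarrow> ('m::finite \<Rightarrow> real) \<Rightarrow> nat \<Rightarrow>
   ('n::finite \<Rightarrow> nat \<Rightarrow> 'm \<Rightarrow> real) \<Rightarrow> ('n \<Rightarrow> nat \<Rightarrow> 'm \<Rightarrow> real) \<Rightarrow> real" where
  "joint_cost C S T P x = (1 / real T) * (\<Sum>t<T. slot_cost C S T P x t)"

definition x_feasible :: "('m::finite \<Rightarrow> real) \<Rightarrow> nat \<Rightarrow> ('n::finite \<Rightarrow> nat \<Rightarrow> 'm \<Rightarrow> real) \<Rightarrow> bool" where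
  "x_feasible S T x \<longleftrightarrow> (\<forall>n t m. t < T \<longrightarrow> 0 \<le> x n t m \<and> x n t m \<le> S m)"

definition P_feasible :: "('n::finite \<Rightarrow> nat \<Rightarrow> 'm::finite \<Rightarrow> real) \<Rightarrow> nat \<Rightarrow> ('n \<Rightarrow> nat \<Rightarrow> 'm \<Rightarrow> real) \<Rightarrow> bool" where
  "P_feasible Ptil T P \<longleftrightarrow>
     (\<forall>n t. t < T \<longrightarrow> (\<forall>m. 0 \<le> P n t m) \<and> (\<Sum>m\<in>UNIV. P n t m) = 1 - inact (Ptil n t))"

definition globally_optimal where
  "globally_optimal C S T Ptil P x \<longleftrightarrow>
     P_feasible Ptil T P \<and> x_feasible S T x \<and>
     (\<forall>P' x'. P_feasible Ptil T P' \<and> x_feasible S T x' \<longrightarrow>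
        joint_cost C S T P x \<le> joint_cost C S T P' x')"

definition x_argmin where
  "x_argmin C S T P x \<longleftrightarrow>
     x_feasible S T x \<and> (\<forall>x'. x_feasible S T x' \<longrightarrow> joint_cost C S T P x \<le> joint_cost C S T P x')"

end

theory Submission
  imports Defs
begin

text \<open>
  Take any feasible pair \<open>(P, x)\<close>, redirect every request to the smallest item \<open>m*\<close> and
  let each user prefetch only \<open>m*\<close>, to the amount \<open>min (S m*) (\<Sum>m. x n t m)\<close>. Redirecting
  outcomes couples \<open>P\<close> with \<open>P*\<close>, and outcome by outcome the argument of \<open>C\<close> does not grow:
  a request for \<open>k\<close> costs \<open>S k - x n t k \<ge> S m* - min (S m*) (\<Sum>m. x n t m)\<close>, and refilling
  costs \<open>min (S m*) (\<Sum>m. x n (t+1) m) \<le> \<Sum>m. x n (t+1) m\<close>. As \<open>C\<close> is increasing,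
  \<open>P*\<close> with the concentrated schedule is no worse than \<open>(P, x)\<close>, so \<open>(P*, x*)\<close> is optimal.
  If \<open>m*\<close> is the only smallest item and \<open>P\<close> puts mass on some \<open>k \<noteq> m*\<close>, one of the two
  inequalities is strict on an outcome of positive probability, so \<open>(P, x)\<close> is not optimal.
\<close>

lemma sum_prod_image_fibres:
  fixes p :: "'n::finite \<Rightarrow> 'a::finite \<Rightarrow> real" and h :: "'a \<Rightarrow> 'b::finite"
    and g :: "('n \<Rightarrow> 'b) \<Rightarrow> real"
  shows "(\<Sum>c\<in>UNIV. (\<Prod>n\<in>UNIV. p n (c n)) * g (\<lambda>n. h (c n))) =
         (\<Sum>d\<in>UNIV. (\<Prod>n\<in>UNIV. \<Sum>a\<in>{a. h a = d n}. p n a) * g d)"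
proof -
  have fibre: "{c. (\<lambda>n. h (c n)) = d} = PiE UNIV (\<lambda>n. {a. h a = d n})" for d
    by (auto simp: PiE_def Pi_def extensional_def fun_eq_iff)
  have "(\<Sum>c\<in>UNIV. (\<Prod>n\<in>UNIV. p n (c n)) * g (\<lambda>n. h (c n))) =
        (\<Sum>d\<in>UNIV. \<Sum>c\<in>{c. (\<lambda>n. h (c n)) = d}. (\<Prod>n\<in>UNIV. p n (c n)) * g d)"
    by (subst sum.group[symmetric, where g = "\<lambda>c. (\<lambda>n. h (c n))"]) auto
  also have "\<dots> = (\<Sum>d\<in>UNIV. (\<Prod>n\<in>UNIV. \<Sum>a\<in>{a. h a = d n}. p n a) * g d)"
    by (simp add: fibre sum_distrib_right[symmetric] prod_sum_PiE)
  finally show ?thesis .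
qed

lemma sum_weighted_mono_on_nonneg:
  fixes w f g :: "'a \<Rightarrow> real"
  assumes "strict_mono_on {0..} C"
    and "\<And>a. a \<in> A \<Longrightarrow> 0 \<le> w a" "\<And>a. a \<in> A \<Longrightarrow> 0 \<le> f a" "\<And>a. a \<in> A \<Longrightarrow> f a \<le> g a"
  shows "(\<Sum>a\<in>A. w a * C (f a)) \<le> (\<Sum>a\<in>A. w a * C (g a))"
  using assms
  by (intro sum_mono mult_left_mono strict_mono_on_leD[of _ C]) (auto intro: order_trans)

lemma sum_weighted_strict_mono_on_nonneg:
  fixes w f g :: "'a \<Rightarrow> real"
  assumes "finite A" "strict_mono_on {0..} C"
    and "\<And>a. a \<in> A \<Longrightarrow> 0 \<le> w a" "\<And>a. a \<in> A \<Longrightarrow> 0 \<le> f a" "\<And>a. a \<in> A \<Longrightarrow> f a \<le> g a"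
    and "a \<in> A" "0 < w a" "f a < g a"
  shows "(\<Sum>a\<in>A. w a * C (f a)) < (\<Sum>a\<in>A. w a * C (g a))"
proof (rule sum_strict_mono_ex1[OF \<open>finite A\<close>])
  show "\<forall>b\<in>A. w b * C (f b) \<le> w b * C (g b)"
    using assms by (auto intro!: mult_left_mono strict_mono_on_leD[of _ C] intro: order_trans)
  have "C (f a) < C (g a)"
    using assms by (intro strict_mono_onD[of _ C]) force+
  then show "\<exists>b\<in>A. w b * C (f b) < w b * C (g b)"
    using assms by (intro bexI[of _ a]) auto
qed

lemma sum_UNIV_option: "(\<Sum>oc\<in>UNIV. f oc) = f None + (\<Sum>m\<in>UNIV. f (Some m))"
  for f :: "'m::finite option \<Rightarrow> 'a::comm_monoid_add"
  by (simp add: UNIV_option_conv sum.reindex)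

lemma sum_outcome_prob: "(\<Sum>oc\<in>UNIV. outcome_prob p oc) = 1"
  by (simp add: sum_UNIV_option outcome_prob_def inact_def)

lemma outcome_prob_nonneg:
  assumes "\<And>m. 0 \<le> p m" "(\<Sum>m\<in>UNIV. p m) \<le> 1"
  shows "0 \<le> outcome_prob p oc"
  using assms by (cases oc) (auto simp: outcome_prob_def inact_def)

lemma exists_outcome_prob_pos:
  assumes "\<And>oc. 0 \<le> outcome_prob p oc"
  obtains oc where "0 < outcome_prob p oc"
proof -
  have "\<not> (\<forall>oc. outcome_prob p oc \<le> 0)"
    using sum_nonpos[of UNIV "outcome_prob p"] by (auto simp: sum_outcome_prob)
  then show ?thesis using that by (auto simp: not_le)
qed

lemma exists_outcome_profile_pos:
  fixes p :: "'n::finite \<Rightarrow> 'm::finite \<Rightarrow> real"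
  assumes nonneg: "\<And>n oc. 0 \<le> outcome_prob (p n) oc" and pos: "0 < outcome_prob (p n0) oc0"
  obtains c where "c n0 = oc0" "0 < (\<Prod>n\<in>UNIV. outcome_prob (p n) (c n))"
proof -
  have "\<forall>n. \<exists>oc. 0 < outcome_prob (p n) oc"
    using exists_outcome_prob_pos[OF nonneg] by metis
  then obtain c where "\<And>n. 0 < outcome_prob (p n) (c n)" by metis
  then have "0 < (\<Prod>n\<in>UNIV. outcome_prob (p n) ((c(n0 := oc0)) n))"
    using pos by (intro prod_pos) auto
  then show ?thesis using that[of "c(n0 := oc0)"] by simp
qed

lemma sum_times_ind:
  fixes oc :: "'m::finite option"
  shows "(\<Sum>m\<in>UNIV. f m * ind oc m) = (case oc of None \<Rightarrow> 0 | Some k \<Rightarrow> f k)"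
proof (cases oc)
  case (Some k)
  have "(\<Sum>m\<in>UNIV. f m * ind (Some k) m) = (\<Sum>m\<in>UNIV. if m = k then f k else 0)"
    by (rule sum.cong) (auto simp: ind_def)
  with Some show ?thesis by simp
qed (simp add: ind_def)

text \<open>The argument of \<open>C\<close> in \<open>slot_cost\<close>, split over users; \<open>a\<close> and \<open>b\<close> are a user's
  cache before and after the slot.\<close>

definition user_load :: "('m::finite \<Rightarrow> real) \<Rightarrow> ('m \<Rightarrow> real) \<Rightarrow> ('m \<Rightarrow> real) \<Rightarrow> 'm option \<Rightarrow> real"
  where "user_load S a b oc = (case oc of None \<Rightarrow> 0 | Some k \<Rightarrow> S k - a k) + (\<Sum>m\<in>UNIV. b m)"

definition slot_load ::
  "('m::finite \<Rightarrow> real) \<Rightarrow> nat \<Rightarrow> ('n::finite \<Rightarrow> nat \<Rightarrow> 'm \<Rightarrow> real) \<Rightarrow> nat \<Rightarrow> ('n \<Rightarrow> 'm option) \<Rightarrow> real"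
  where "slot_load S T x t c = (\<Sum>n\<in>UNIV. user_load S (x n t) (x n (Suc t mod T)) (c n))"

lemma slot_cost_eq_slot_load:
  "slot_cost C S T P x t
     = (\<Sum>c\<in>UNIV. (\<Prod>n\<in>UNIV. outcome_prob (P n t) (c n)) * C (slot_load S T x t c))"
proof -
  have "(\<Sum>m\<in>UNIV. \<Sum>n\<in>UNIV. S m * ind (c n) m)
          + (\<Sum>m\<in>UNIV. \<Sum>n\<in>UNIV. x n (Suc t mod T) m - x n t m * ind (c n) m)
        = (\<Sum>n\<in>UNIV. (\<Sum>m\<in>UNIV. S m * ind (c n) m) - (\<Sum>m\<in>UNIV. x n t m * ind (c n) m)
                      + (\<Sum>m\<in>UNIV. x n (Suc t mod T) m))" for c
    by (subst (1 2) sum.swap) (simp add: sum.distrib sum_subtractf algebra_simps)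
  also have "\<dots> c = slot_load S T x t c" for c
    unfolding slot_load_def user_load_def sum_times_ind
    by (rule sum.cong) (simp_all split: option.split)
  finally show ?thesis by (simp add: slot_cost_def)
qed

lemma slot_cost_cong: "(\<And>n. P n t = Q n t) \<Longrightarrow> slot_cost C S T P x t = slot_cost C S T Q x t"
  by (simp add: slot_cost_def)

lemma joint_cost_cong:
  "(\<And>n t. t < T \<Longrightarrow> P n t = Q n t) \<Longrightarrow> joint_cost C S T P x = joint_cost C S T Q x"
  unfolding joint_cost_def by (metis (no_types, lifting) lessThan_iff slot_cost_cong sum.cong)

definition redirect :: "'m \<Rightarrow> 'm option \<Rightarrow> 'm option"
  where "redirect ms oc = map_option (\<lambda>_. ms) oc"

definition concentrated_profiles :: "('n \<Rightarrow> nat \<Rightarrow> 'm::finite \<Rightarrow> real) \<Rightarrow> 'm \<Rightarrow> 'n \<Rightarrow> nat \<Rightarrow> 'm \<Rightarrow> real"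
  where "concentrated_profiles P ms n t = (\<lambda>m. if m = ms then (\<Sum>j\<in>UNIV. P n t j) else 0)"

definition concentrate :: "('m::finite \<Rightarrow> real) \<Rightarrow> 'm \<Rightarrow> ('m \<Rightarrow> real) \<Rightarrow> 'm \<Rightarrow> real"
  where "concentrate S ms a m = (if m = ms then min (S ms) (\<Sum>k\<in>UNIV. a k) else 0)"

definition concentrate_schedule ::
  "('m::finite \<Rightarrow> real) \<Rightarrow> 'm \<Rightarrow> ('n \<Rightarrow> nat \<Rightarrow> 'm \<Rightarrow> real) \<Rightarrow> 'n \<Rightarrow> nat \<Rightarrow> 'm \<Rightarrow> real"
  where "concentrate_schedule S ms x n t = concentrate S ms (x n t)"

lemma sum_outcome_prob_redirect_fibre:
  "(\<Sum>oc\<in>{oc. redirect ms oc = d}. outcome_prob p oc)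
     = outcome_prob (\<lambda>m. if m = ms then (\<Sum>j\<in>UNIV. p j) else 0) d"
proof (cases d)
  case None
  then have "{oc. redirect ms oc = d} = {None}" by (auto simp: redirect_def)
  then show ?thesis using None by (simp add: outcome_prob_def inact_def)
next
  case (Some k)
  then have "{oc. redirect ms oc = d} = (if k = ms then range Some else {})"
    by (auto simp: redirect_def)
  then show ?thesis using Some by (simp add: outcome_prob_def sum.reindex)
qed

lemma slot_cost_concentrated_profiles:
  "slot_cost C S T (concentrated_profiles P ms) y t
     = (\<Sum>c\<in>UNIV. (\<Prod>n\<in>UNIV. outcome_prob (P n t) (c n))
                    * C (slot_load S T y t (\<lambda>n. redirect ms (c n))))"
proof -
  have "(\<Sum>c\<in>UNIV. (\<Prod>n\<in>UNIV. outcome_prob (P n t) (c n))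
                    * C (slot_load S T y t (\<lambda>n. redirect ms (c n))))
      = (\<Sum>d\<in>UNIV. (\<Prod>n\<in>UNIV. \<Sum>oc\<in>{oc. redirect ms oc = d n}. outcome_prob (P n t) oc)
                     * C (slot_load S T y t d))"
    by (rule sum_prod_image_fibres)
  then show ?thesis
    by (simp add: sum_outcome_prob_redirect_fibre slot_cost_eq_slot_load concentrated_profiles_def)
qed

lemma sum_concentrate: "(\<Sum>m\<in>UNIV. concentrate S ms a m) = min (S ms) (\<Sum>k\<in>UNIV. a k)"
  by (simp add: concentrate_def)

context
  fixes S :: "'m::finite \<Rightarrow> real" and ms :: 'm and a b :: "'m \<Rightarrow> real"
  assumes a_bounds: "\<And>m. 0 \<le> a m" "\<And>m. a m \<le> S m" and b_nonneg: "\<And>m. 0 \<le> b m"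
    and S_min: "\<And>m. S ms \<le> S m"
begin

lemma user_load_concentrate_redirect:
  "user_load S (concentrate S ms a) (concentrate S ms b) (redirect ms oc)
     = (case oc of None \<Rightarrow> 0 | Some _ \<Rightarrow> S ms - min (S ms) (\<Sum>k\<in>UNIV. a k))
       + min (S ms) (\<Sum>k\<in>UNIV. b k)"
  by (cases oc) (simp_all add: user_load_def redirect_def sum_concentrate concentrate_def)

lemma user_load_concentrate_nonneg:
  "0 \<le> user_load S (concentrate S ms a) (concentrate S ms b) (redirect ms oc)"
proof -
  have "0 \<le> S ms" using a_bounds[of ms] by linarith
  moreover have "0 \<le> (\<Sum>k\<in>UNIV. b k)" by (simp add: b_nonneg sum_nonneg)
  ultimately show ?thesis
    by (cases oc) (simp_all add: user_load_concentrate_redirect)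
qed

private lemma request_cost_concentrate_le:
  "S ms - min (S ms) (\<Sum>j\<in>UNIV. a j) \<le> S k - a k"
  using member_le_sum[of k UNIV a] a_bounds S_min[of k] by (force simp: min_def)

lemma user_load_concentrate_le:
  "user_load S (concentrate S ms a) (concentrate S ms b) (redirect ms oc) \<le> user_load S a b oc"
  unfolding user_load_concentrate_redirect
  by (cases oc) (simp_all add: user_load_def add_mono request_cost_concentrate_le)

lemma user_load_concentrate_less_refill:
  assumes "S ms < (\<Sum>k\<in>UNIV. b k)"
  shows "user_load S (concentrate S ms a) (concentrate S ms b) (redirect ms oc)
           < user_load S a b oc"
proof (cases oc)
  case (Some k)
  show ?thesis
    unfolding user_load_concentrate_redirect
    using Some assms request_cost_concentrate_le[of k] by (simp add: user_load_def)
qed (use assms in \<open>simp add: redirect_def sum_concentrate user_load_def\<close>)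

lemma user_load_concentrate_less_request:
  assumes "S ms < S k" "(\<Sum>j\<in>UNIV. a j) \<le> S ms"
  shows "user_load S (concentrate S ms a) (concentrate S ms b) (redirect ms (Some k))
           < user_load S a b (Some k)"
  unfolding user_load_concentrate_redirect using assms member_le_sum[of k UNIV a] a_bounds
  by (simp add: user_load_def)

end

context
  fixes S :: "'m::finite \<Rightarrow> real" and T :: nat and x :: "'n::finite \<Rightarrow> nat \<Rightarrow> 'm \<Rightarrow> real"
    and t :: nat and ms :: 'm
  assumes x_feas: "x_feasible S T x" and t_less: "t < T" and S_min: "\<And>m. S ms \<le> S m"
begin

private lemma cache_bounds:
  "\<And>m. 0 \<le> x n t m" "\<And>m. x n t m \<le> S m" "\<And>m. 0 \<le> x n (Suc t mod T) m"
  using x_feas t_less by (auto simp: x_feasible_def)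

lemma slot_load_concentrate_nonneg:
  "0 \<le> slot_load S T (concentrate_schedule S ms x) t (\<lambda>n. redirect ms (c n))"
  unfolding slot_load_def concentrate_schedule_def
  by (intro sum_nonneg user_load_concentrate_nonneg) (simp_all add: cache_bounds S_min)

lemma slot_load_concentrate_le:
  "slot_load S T (concentrate_schedule S ms x) t (\<lambda>n. redirect ms (c n)) \<le> slot_load S T x t c"
  unfolding slot_load_def concentrate_schedule_def
  by (intro sum_mono user_load_concentrate_le) (simp_all add: cache_bounds S_min)

lemma slot_load_concentrate_less_refill:
  assumes "S ms < (\<Sum>m\<in>UNIV. x n (Suc t mod T) m)"
  shows "slot_load S T (concentrate_schedule S ms x) t (\<lambda>n. redirect ms (c n))
           < slot_load S T x t c"
  unfolding slot_load_def concentrate_schedule_def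
  using assms cache_bounds S_min
  by (intro sum_strict_mono_ex1 bexI[of _ n])
    (auto intro: user_load_concentrate_le user_load_concentrate_less_refill)

lemma slot_load_concentrate_less_request:
  assumes "c n = Some k" "S ms < S k" "(\<Sum>m\<in>UNIV. x n t m) \<le> S ms"
  shows "slot_load S T (concentrate_schedule S ms x) t (\<lambda>n. redirect ms (c n))
           < slot_load S T x t c"
  unfolding slot_load_def concentrate_schedule_def
  using assms cache_bounds S_min
  by (intro sum_strict_mono_ex1 bexI[of _ n])
    (auto intro: user_load_concentrate_le user_load_concentrate_less_request)

lemma slot_cost_concentrate_le:
  assumes "strict_mono_on {0..} C" "\<And>n oc. 0 \<le> outcome_prob (P n t) oc"
  shows "slot_cost C S T (concentrated_profiles P ms) (concentrate_schedule S ms x) t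
           \<le> slot_cost C S T P x t"
  unfolding slot_cost_concentrated_profiles slot_cost_eq_slot_load[of C S T P x t]
  using assms
  by (intro sum_weighted_mono_on_nonneg)
    (auto intro: prod_nonneg slot_load_concentrate_nonneg slot_load_concentrate_le)

lemma slot_cost_concentrate_less:
  assumes "strict_mono_on {0..} C" "\<And>n oc. 0 \<le> outcome_prob (P n t) oc"
    and "0 < (\<Prod>n\<in>UNIV. outcome_prob (P n t) (c n))"
    and "slot_load S T (concentrate_schedule S ms x) t (\<lambda>n. redirect ms (c n))
           < slot_load S T x t c"
  shows "slot_cost C S T (concentrated_profiles P ms) (concentrate_schedule S ms x) t
           < slot_cost C S T P x t"
  unfolding slot_cost_concentrated_profiles slot_cost_eq_slot_load[of C S T P x t]
  using assms
  by (intro sum_weighted_strict_mono_on_nonneg[where a = c])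
    (auto intro: prod_nonneg slot_load_concentrate_nonneg slot_load_concentrate_le)

end

lemma P_feasible_outcome_prob_nonneg:
  assumes "P_feasible Ptil T P" "\<And>n t. t < T \<Longrightarrow> (\<Sum>m\<in>UNIV. Ptil n t m) \<le> 1" "t < T"
  shows "0 \<le> outcome_prob (P n t) oc"
  using assms by (intro outcome_prob_nonneg) (auto simp: P_feasible_def inact_def)

lemma P_feasible_concentrated_profiles:
  assumes "\<And>n t m. t < T \<Longrightarrow> 0 \<le> Ptil n t m"
  shows "P_feasible Ptil T (concentrated_profiles Ptil ms)"
  using assms by (simp add: P_feasible_def concentrated_profiles_def inact_def sum_nonneg)

lemma x_feasible_concentrate_schedule:
  assumes "\<And>m. 0 \<le> S m" "x_feasible S T x"
  shows "x_feasible S T (concentrate_schedule S ms x)"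
  using assms by (auto simp: x_feasible_def concentrate_schedule_def concentrate_def sum_nonneg)

lemma joint_cost_concentrated_profiles_eq:
  assumes "P_feasible Ptil T P"
  shows "joint_cost C S T (concentrated_profiles Ptil ms) y
           = joint_cost C S T (concentrated_profiles P ms) y"
  using assms
  by (intro joint_cost_cong) (auto simp: P_feasible_def concentrated_profiles_def inact_def)

lemma joint_cost_concentrate_le:
  assumes C_mono: "strict_mono_on {0..} C" and S_min: "\<And>m. S ms \<le> S m"
    and Ptil_mass: "\<And>n t. t < T \<Longrightarrow> (\<Sum>m\<in>UNIV. Ptil n t m) \<le> 1"
    and P_feas: "P_feasible Ptil T P" and x_feas: "x_feasible S T x"
  shows "joint_cost C S T (concentrated_profiles Ptil ms) (concentrate_schedule S ms x)
           \<le> joint_cost C S T P x"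
  unfolding joint_cost_concentrated_profiles_eq[OF P_feas] unfolding joint_cost_def
  by (intro mult_left_mono sum_mono slot_cost_concentrate_le[OF x_feas _ S_min C_mono]
      P_feasible_outcome_prob_nonneg[OF P_feas Ptil_mass]) auto

lemma joint_cost_concentrate_less:
  assumes C_mono: "strict_mono_on {0..} C" and S_min: "\<And>m. S ms \<le> S m"
    and S_min_unique: "\<And>m. S m = S ms \<Longrightarrow> m = ms"
    and Ptil_mass: "\<And>n t. t < T \<Longrightarrow> (\<Sum>m\<in>UNIV. Ptil n t m) \<le> 1"
    and P_feas: "P_feasible Ptil T P" and x_feas: "x_feasible S T x"
    and t_less: "t < T" and k_ne: "k \<noteq> ms" and P_pos: "0 < P n t k"
  shows "joint_cost C S T (concentrated_profiles Ptil ms) (concentrate_schedule S ms x)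
           < joint_cost C S T P x"
proof -
  have nonneg: "\<And>s n oc. s < T \<Longrightarrow> 0 \<le> outcome_prob (P n s) oc"
    using P_feasible_outcome_prob_nonneg[OF P_feas] Ptil_mass by blast
  txt \<open>Either user \<open>n\<close> has more than \<open>S ms\<close> cached for slot \<open>t\<close>, which makes refilling before
    slot \<open>t\<close> strictly cheaper, or its request for \<open>k\<close> in slot \<open>t\<close> becomes strictly cheaper.\<close>
  have "\<exists>s<T. slot_cost C S T (concentrated_profiles P ms) (concentrate_schedule S ms x) s
               < slot_cost C S T P x s"
  proof (cases "S ms < (\<Sum>m\<in>UNIV. x n t m)")
    case True
    define s where "s = (t + T - 1) mod T"
    have s_less: "s < T" and s_succ: "Suc s mod T = t"
      using t_less by (simp_all add: s_def mod_Suc_eq)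
    obtain oc where "0 < outcome_prob (P n s) oc"
      using exists_outcome_prob_pos nonneg[OF s_less] by blast
    then obtain c where "0 < (\<Prod>n\<in>UNIV. outcome_prob (P n s) (c n))"
      using exists_outcome_profile_pos[of "\<lambda>n. P n s" n oc] nonneg[OF s_less] by blast
    moreover have "slot_load S T (concentrate_schedule S ms x) s (\<lambda>n. redirect ms (c n))
                     < slot_load S T x s c"
      using slot_load_concentrate_less_refill[OF x_feas s_less S_min] True s_succ by simp
    ultimately show ?thesis
      using slot_cost_concentrate_less[where P = P, OF x_feas s_less S_min C_mono nonneg[OF s_less]]
        s_less by blast
  next
    case False
    have "S ms < S k" using S_min[of k] S_min_unique[of k] k_ne by force
    obtain c where "c n = Some k" "0 < (\<Prod>n\<in>UNIV. outcome_prob (P n t) (c n))"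
      using exists_outcome_profile_pos[of "\<lambda>n. P n t" n "Some k"] nonneg[OF t_less] P_pos
      by (auto simp: outcome_prob_def)
    moreover have "slot_load S T (concentrate_schedule S ms x) t (\<lambda>n. redirect ms (c n))
                     < slot_load S T x t c"
      using slot_load_concentrate_less_request[OF x_feas t_less S_min] \<open>S ms < S k\<close> False
        calculation by simp
    ultimately show ?thesis
      using slot_cost_concentrate_less[where P = P, OF x_feas t_less S_min C_mono nonneg[OF t_less]]
        t_less by blast
  qed
  then have "joint_cost C S T (concentrated_profiles P ms) (concentrate_schedule S ms x)
               < joint_cost C S T P x"
    unfolding joint_cost_def using t_less
    by (intro mult_strict_left_mono sum_strict_mono_ex1)
      (auto intro: slot_cost_concentrate_le[where P = P, OF x_feas _ S_min C_mono nonneg])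
  then show ?thesis unfolding joint_cost_concentrated_profiles_eq[OF P_feas] .
qed

lemma P_feasible_other_item_pos:
  assumes "P_feasible Ptil T P" "t < T" "P n t \<noteq> concentrated_profiles Ptil ms n t"
  obtains k where "k \<noteq> ms" "0 < P n t k"
proof -
  have nonneg: "\<And>k. 0 \<le> P n t k" and mass: "(\<Sum>j\<in>UNIV. P n t j) = (\<Sum>j\<in>UNIV. Ptil n t j)"
    using assms by (auto simp: P_feasible_def inact_def)
  show ?thesis
  proof (rule ccontr)
    assume "\<not> thesis"
    then have "\<And>k. k \<noteq> ms \<Longrightarrow> P n t k = 0"
      using that nonneg by (meson antisym not_le)
    then have "(\<Sum>j\<in>UNIV. P n t j) = (\<Sum>j\<in>UNIV. if j = ms then P n t j else 0)"
      by (intro sum.cong) auto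
    then have "P n t = concentrated_profiles Ptil ms n t"
      using mass \<open>\<And>k. k \<noteq> ms \<Longrightarrow> P n t k = 0\<close>
      by (auto simp: concentrated_profiles_def fun_eq_iff)
    with assms(3) show False ..
  qed
qed

lemma globally_optimal_concentrated_profiles:
  fixes Ptil :: "'n::finite \<Rightarrow> nat \<Rightarrow> 'm::finite \<Rightarrow> real"
  assumes C_mono: "strict_mono_on {0..} C" and S_nonneg: "\<And>m. 0 \<le> S m" and S_min: "\<And>m. S ms \<le> S m"
    and Ptil_nonneg: "\<And>n t m. t < T \<Longrightarrow> 0 \<le> Ptil n t m"
    and Ptil_mass: "\<And>n t. t < T \<Longrightarrow> (\<Sum>m\<in>UNIV. Ptil n t m) \<le> 1"
    and x_opt: "x_argmin C S T (concentrated_profiles Ptil ms) xs"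
  shows "globally_optimal C S T Ptil (concentrated_profiles Ptil ms) xs"
  unfolding globally_optimal_def
proof (intro conjI allI impI)
  show "P_feasible Ptil T (concentrated_profiles Ptil ms)"
    using P_feasible_concentrated_profiles Ptil_nonneg .
  show "x_feasible S T xs" using x_opt by (simp add: x_argmin_def)
  fix P x :: "'n \<Rightarrow> nat \<Rightarrow> 'm \<Rightarrow> real"
  assume "P_feasible Ptil T P \<and> x_feasible S T x"
  then have P_feas: "P_feasible Ptil T P" and x_feas: "x_feasible S T x" by auto
  have "joint_cost C S T (concentrated_profiles Ptil ms) xs
          \<le> joint_cost C S T (concentrated_profiles Ptil ms) (concentrate_schedule S ms x)"
    using x_opt x_feasible_concentrate_schedule[OF S_nonneg x_feas] by (simp add: x_argmin_def)
  also have "\<dots> \<le> joint_cost C S T P x"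
    by (rule joint_cost_concentrate_le[OF C_mono S_min Ptil_mass P_feas x_feas])
  finally show "joint_cost C S T (concentrated_profiles Ptil ms) xs \<le> joint_cost C S T P x" .
qed

lemma globally_optimal_imp_concentrated_profiles:
  assumes C_mono: "strict_mono_on {0..} C" and S_nonneg: "\<And>m. 0 \<le> S m" and S_min: "\<And>m. S ms \<le> S m"
    and S_min_unique: "\<And>m. S m = S ms \<Longrightarrow> m = ms"
    and Ptil_nonneg: "\<And>n t m. t < T \<Longrightarrow> 0 \<le> Ptil n t m"
    and Ptil_mass: "\<And>n t. t < T \<Longrightarrow> (\<Sum>m\<in>UNIV. Ptil n t m) \<le> 1"
    and opt: "globally_optimal C S T Ptil P x" and t_less: "t < T"
  shows "P n t = concentrated_profiles Ptil ms n t"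
proof (rule ccontr)
  assume "P n t \<noteq> concentrated_profiles Ptil ms n t"
  moreover have P_feas: "P_feasible Ptil T P" and x_feas: "x_feasible S T x"
    using opt by (auto simp: globally_optimal_def)
  ultimately obtain k where "k \<noteq> ms" "0 < P n t k"
    using P_feasible_other_item_pos t_less by blast
  then have "joint_cost C S T (concentrated_profiles Ptil ms) (concentrate_schedule S ms x)
               < joint_cost C S T P x"
    by (intro joint_cost_concentrate_less[OF C_mono S_min S_min_unique Ptil_mass P_feas x_feas
          t_less])
  moreover have "joint_cost C S T P x
                   \<le> joint_cost C S T (concentrated_profiles Ptil ms) (concentrate_schedule S ms x)"
    using opt P_feasible_concentrated_profiles[where Ptil = Ptil, OF Ptil_nonneg]
      x_feasible_concentrate_schedule[OF S_nonneg x_feas]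
    by (auto simp: globally_optimal_def)
  ultimately show False by simp
qed

theorem theorem4:
  fixes C :: "real \<Rightarrow> real"
    and S :: "'m::finite \<Rightarrow> real"
    and T :: nat
    and Ptil :: "'n::finite \<Rightarrow> nat \<Rightarrow> 'm \<Rightarrow> real"
    and mstar :: 'm
    and Pstar xstar :: "'n \<Rightarrow> nat \<Rightarrow> 'm \<Rightarrow> real"
  assumes T_pos: "0 < T"
    and S_pos: "\<And>m. 0 < S m"
    and Ptil_nonneg: "\<And>n t m. t < T \<Longrightarrow> 0 \<le> Ptil n t m"
    and Ptil_mass: "\<And>n t. t < T \<Longrightarrow> (\<Sum>m\<in>UNIV. Ptil n t m) \<le> 1"
    and C_nonneg: "\<And>y. 0 \<le> y \<Longrightarrow> 0 \<le> C y"
    and C_incr: "strict_mono_on {0..} C"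
    and C_strict_convex: "strictly_convex_on {0..} C"
    and C_cont: "continuous_on {0..} C"
    and C_smooth: "\<And>k y. 0 < y \<Longrightarrow> ((deriv ^^ k) C) differentiable (at y)"
    and mstar_min: "mstar \<in> {m. S m = Min (range S)}"
    and Pstar_def: "Pstar = (\<lambda>n t m. if m = mstar then 1 - inact (Ptil n t) else 0)"
    and xstar_argmin: "x_argmin C S T Pstar xstar"
  shows "globally_optimal C S T Ptil Pstar xstar \<and>
         (card {m. S m = Min (range S)} = 1 \<longrightarrow>
            (\<forall>P x. globally_optimal C S T Ptil P x \<longrightarrow>
               (\<forall>n t m. t < T \<longrightarrow> P n t m = Pstar n t m) \<and> x_argmin C S T Pstar x))"
proof -
  have S_min: "\<And>m. S mstar \<le> S m"
    using mstar_min by (auto intro: Min_le)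
  have S_nonneg: "\<And>m. 0 \<le> S m"
    using S_pos less_imp_le by blast
  have Pstar_eq: "Pstar = concentrated_profiles Ptil mstar"
    unfolding Pstar_def by (simp add: concentrated_profiles_def inact_def fun_eq_iff)
  have Pstar_opt: "globally_optimal C S T Ptil Pstar xstar"
    unfolding Pstar_eq
    by (rule globally_optimal_concentrated_profiles)
      (use C_incr S_nonneg S_min Ptil_nonneg Ptil_mass xstar_argmin[unfolded Pstar_eq] in auto)
  moreover have "(\<forall>n t m. t < T \<longrightarrow> P n t m = Pstar n t m) \<and> x_argmin C S T Pstar x"
    if card_one: "card {m. S m = Min (range S)} = 1"
      and opt: "globally_optimal C S T Ptil P x" for P x
  proof -
    obtain m0 where "{m. S m = Min (range S)} = {m0}"
      using card_one by (rule card_1_singletonE)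
    then have S_min_unique: "m = mstar" if "S m = S mstar" for m
      using mstar_min that by (metis mem_Collect_eq singletonD)
    have P_eq: "\<And>n t. t < T \<Longrightarrow> P n t = Pstar n t"
      unfolding Pstar_eq
      using globally_optimal_imp_concentrated_profiles[where S = S and ms = mstar and Ptil = Ptil,
          OF C_incr S_nonneg S_min S_min_unique Ptil_nonneg Ptil_mass opt] .
    then have "joint_cost C S T P x' = joint_cost C S T Pstar x'" for x'
      by (rule joint_cost_cong)
    then have "x_argmin C S T Pstar x"
      using opt Pstar_opt by (auto simp: globally_optimal_def x_argmin_def)
    with P_eq show ?thesis by simp
  qed
  ultimately show ?thesis by blast
qed

end
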